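(* Let $G$, $P$, $w$ be as in the context, let $t\in V$, let $\mathcal F\subseteq V\setminus\{t\}$ be a set of failed nodes, and let $s\in V\setminus(\mathcal F\cup\{t\})$ be such that there is a directed path from $s$ to $t$ in $G$ avoiding $\mathcal F$. Let $L_{st}^{\overline{\mathcal F}}$ be the minimum total cost of a directed path from $s$ to $t$ in the graph obtained from $G$ by deleting the nodes of $\mathcal F$. Then $$\lim_{\alpha\to0^+}U_s^{\{t,\overline{\mathcal F\cup\{o\}}\}}(\alpha)=L_{st}^{\overline{\mathcal F}}.$$
   Context: $G=(V,E)$ is a finite directed graph; each edge $e_{ij}\in E$ has a positive cost $w_{ij}$; $P$ is a row-stochastic transition matrix with $P_{ij}>0$ iff $e_{ij}\in E$. Evaporating network $G_\alpha$ ($0<\alpha<1$): Markov chain on $V\cup\{o\}$ with $P_{ij}(\alpha)=P_{ij}\alpha^{w_{ij}}$ ($i,j\in V$), $P_{io}(\alpha)=1-\sum_jP_{ij}\alpha^{w_{ij}}$, $o$ absorbing. Avoidance hitting cost with avoided set $B$: make $t$, $o$ and all nodes of $B\subseteq V\setminus\{t\}$ absorbing in $G_\alpha$, let $\mathcal T=V\setminus(\{t\}\cup B)$, let $Q_x$ be the probability that the chain from $x$ is absorbed at $t$ (so $Q_t=1$, $Q_o=Q_b=0$ for $b\in B$), let $F(\alpha)=(I-P(\alpha)_{\mathcal T\mathcal T})^{-1}$, and set $U_s^{\{t,\overline{B\cup\{o\}}\}}(\alpha)=\sum_{m\in\mathcal T}F_{sm}(\alpha)\frac{Q_m}{Q_s}r_m$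 with $r_m=\sum_iP_{mi}(\alpha)w_{mi}Q_i/Q_m$ (terms with $Q_m=0$ omitted). This is the expected total cost of the walk from $s$ conditioned on being absorbed at $t$ (thus avoiding $B$ and $o$). *)

theory Defs
  imports Complex_Main
begin

text \<open>Vertices form a finite set V; P i j is the transition matrix (edge (i,j) exists iff
  P i j > 0); w i j is the edge cost.  The extra absorbing node o is not represented
  explicitly: it only receives the missing mass 1 - sum_j P(alpha) i j and has Q_o = 0.\<close>

definition Pev :: "('v \<Rightarrow> 'v \<Rightarrow> real) \<Rightarrow> ('v \<Rightarrow> 'v \<Rightarrow> real) \<Rightarrow> real \<Rightarrow> 'v \<Rightarrow> 'v \<Rightarrow> real" where
  "Pev P w \<alpha> i j = P i j * \<alpha> powr (w i j)"

definition transient :: "'v set \<Rightarrow> 'v \<Rightarrow> 'v set \<Rightarrow> 'v set" where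
  "transient V t B = V - ({t} \<union> B)"

text \<open>Fundamental matrix F = (I - P(alpha)_TT)^(-1), as the (unique) matrix indexed by T
  (zero outside T x T) satisfying (I - P(alpha)_TT) F = I.\<close>
definition fundmat :: "'v set \<Rightarrow> ('v \<Rightarrow> 'v \<Rightarrow> real) \<Rightarrow> ('v \<Rightarrow> 'v \<Rightarrow> real) \<Rightarrow> real \<Rightarrow> 'v \<Rightarrow> 'v set
    \<Rightarrow> 'v \<Rightarrow> 'v \<Rightarrow> real" where
  "fundmat V P w \<alpha> t B = (THE F.
     (\<forall>s\<in>transient V t B. \<forall>m\<in>transient V t B.
        F s m - (\<Sum>k\<in>transient V t B. Pev P w \<alpha> s k * F k m) = (if s = m then 1 else 0))
   \<and> (\<forall>s m. s \<notin> transient V t B \<or> m \<notin> transient V t B \<longrightarrow> F s m = 0))"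

definition absQ :: "'v set \<Rightarrow> ('v \<Rightarrow> 'v \<Rightarrow> real) \<Rightarrow> ('v \<Rightarrow> 'v \<Rightarrow> real) \<Rightarrow> real \<Rightarrow> 'v \<Rightarrow> 'v set
    \<Rightarrow> 'v \<Rightarrow> real" where
  "absQ V P w \<alpha> t B x =
     (if x = t then 1
      else if x \<in> transient V t B then
        (\<Sum>m\<in>transient V t B. fundmat V P w \<alpha> t B x m * Pev P w \<alpha> m t)
      else 0)"

definition rcost :: "'v set \<Rightarrow> ('v \<Rightarrow> 'v \<Rightarrow> real) \<Rightarrow> ('v \<Rightarrow> 'v \<Rightarrow> real) \<Rightarrow> real \<Rightarrow> 'v \<Rightarrow> 'v set
    \<Rightarrow> 'v \<Rightarrow> real" where
  "rcost V P w \<alpha> t B m =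
     (\<Sum>i\<in>V. Pev P w \<alpha> m i * w m i * absQ V P w \<alpha> t B i) / absQ V P w \<alpha> t B m"

definition avoidU :: "'v set \<Rightarrow> ('v \<Rightarrow> 'v \<Rightarrow> real) \<Rightarrow> ('v \<Rightarrow> 'v \<Rightarrow> real) \<Rightarrow> real \<Rightarrow> 'v \<Rightarrow> 'v set
    \<Rightarrow> 'v \<Rightarrow> real" where
  "avoidU V P w \<alpha> t B s =
     (\<Sum>m\<in>{m\<in>transient V t B. absQ V P w \<alpha> t B m \<noteq> 0}.
        fundmat V P w \<alpha> t B s m * (absQ V P w \<alpha> t B m / absQ V P w \<alpha> t B s)
        * rcost V P w \<alpha> t B m)"

definition dpath :: "'v set \<Rightarrow> ('v \<Rightarrow> 'v \<Rightarrow> real) \<Rightarrow> 'v set \<Rightarrow> 'v \<Rightarrow> 'v \<Rightarrow> 'v list \<Rightarrow> bool" where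
  "dpath V P Fs s t xs \<longleftrightarrow> xs \<noteq> [] \<and> hd xs = s \<and> last xs = t \<and> distinct xs
     \<and> set xs \<subseteq> V - Fs \<and> (\<forall>k < length xs - 1. P (xs ! k) (xs ! Suc k) > 0)"

definition path_cost :: "('v \<Rightarrow> 'v \<Rightarrow> real) \<Rightarrow> 'v list \<Rightarrow> real" where
  "path_cost w xs = (\<Sum>k < length xs - 1. w (xs ! k) (xs ! Suc k))"

definition Lmin :: "'v set \<Rightarrow> ('v \<Rightarrow> 'v \<Rightarrow> real) \<Rightarrow> ('v \<Rightarrow> 'v \<Rightarrow> real) \<Rightarrow> 'v set \<Rightarrow> 'v \<Rightarrow> 'v \<Rightarrow> real" where
  "Lmin V P w Fs s t = Min (path_cost w ` {xs. dpath V P Fs s t xs})"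

end

theory Submission
  imports Defs
begin

text \<open>
  Write U = N / Q, where Q is the probability of absorption at t and N = F C accumulates the
  expected cost of the successful walks, and let L be the distance to t in G - Fs.  Scaling
  Q = \<alpha>^L Q_scaled and N = L Q + \<alpha>^L D_scaled gives U = L + D_scaled / Q_scaled, and both
  scaled functions satisfy linear equations for the kernel P x i \<alpha>^(w x i + L i - L x) on the
  nodes that reach t.  The exponents (reduced costs) are nonnegative by the Bellman inequality,
  and for \<alpha> \<le> 1/2 the function 2^L is strictly superharmonic for this kernel.  A maximum
  principle then bounds Q_scaled from above and D_scaled between 0 and O(1 / - ln \<alpha>), because
  the source term of D_scaled consists of quantities \<alpha>^r r \<le> 1 / - ln \<alpha>.  Along a shortest
  path Q_scaled stays above the product of the transition probabilities, so U - L \<rightarrow> 0.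
\<close>

section \<open>Substochastic linear systems\<close>

lemma max_principle:
  fixes A :: "'a \<Rightarrow> 'a \<Rightarrow> real"
  assumes fin: "finite S" and x: "x \<in> S"
    and A_nonneg: "\<And>a k. a \<in> S \<Longrightarrow> k \<in> S \<Longrightarrow> A a k \<ge> 0"
    and \<phi>_pos: "\<And>a. a \<in> S \<Longrightarrow> \<phi> a > 0"
    and \<phi>_super: "\<And>a. a \<in> S \<Longrightarrow> (\<Sum>k\<in>S. A a k * \<phi> k) \<le> \<phi> a - c"
    and c: "c > 0" and \<eta>: "\<eta> \<ge> 0"
    and v_sub: "\<And>a. a \<in> S \<Longrightarrow> v a \<le> (\<Sum>k\<in>S. A a k * v k) + \<eta>"
  shows "v x \<le> \<eta> / c * \<phi> x"
proof -
  define lam where "lam = Max ((\<lambda>a. v a / \<phi> a) ` S)"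
  have v_le: "v a \<le> lam * \<phi> a" if "a \<in> S" for a
  proof -
    have "v a / \<phi> a \<le> lam" unfolding lam_def using fin that by auto
    then show ?thesis using \<phi>_pos[OF that] by (simp add: divide_le_eq)
  qed
  have "lam \<in> (\<lambda>a. v a / \<phi> a) ` S" unfolding lam_def using fin x by (intro Max_in) auto
  then obtain a where a: "a \<in> S" and v_a: "v a = lam * \<phi> a"
    using \<phi>_pos by fastforce
  have "lam \<le> \<eta> / c"
  proof (rule ccontr)
    assume "\<not> lam \<le> \<eta> / c"
    then have lam_pos: "lam > 0" using \<eta> c by (smt (verit) divide_nonneg_pos)
    have "lam * \<phi> a \<le> (\<Sum>k\<in>S. A a k * v k) + \<eta>" using v_sub[OF a] v_a by simp
    also have "(\<Sum>k\<in>S. A a k * v k) \<le> lam * (\<Sum>k\<in>S. A a k * \<phi> k)"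
      unfolding sum_distrib_left
      by (rule sum_mono) (metis A_nonneg[OF a] mult.left_commute mult_left_mono v_le)
    also have "\<dots> \<le> lam * (\<phi> a - c)" using \<phi>_super[OF a] lam_pos by simp
    finally have "lam * c \<le> \<eta>" by (simp add: algebra_simps)
    then show False using \<open>\<not> lam \<le> \<eta> / c\<close> c by (simp add: le_divide_eq)
  qed
  then show ?thesis using v_le[OF x] \<phi>_pos[OF x] by (smt (verit) mult_right_mono)
qed

lemma substochastic_subsolution_nonpos:
  fixes A :: "'a \<Rightarrow> 'a \<Rightarrow> real"
  assumes fin: "finite S" and x: "x \<in> S"
    and A_nonneg: "\<And>a k. a \<in> S \<Longrightarrow> k \<in> S \<Longrightarrow> A a k \<ge> 0"
    and rows: "\<And>a. a \<in> S \<Longrightarrow> (\<Sum>k\<in>S. A a k) < 1"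
    and v_sub: "\<And>a. a \<in> S \<Longrightarrow> v a \<le> (\<Sum>k\<in>S. A a k * v k)"
  shows "v x \<le> 0"
proof (rule ccontr)
  assume "\<not> v x \<le> 0"
  define m where "m = Max (v ` S)"
  have v_le: "v k \<le> m" if "k \<in> S" for k unfolding m_def using fin that by auto
  have m_pos: "m > 0" using v_le[OF x] \<open>\<not> v x \<le> 0\<close> by linarith
  have "m \<in> v ` S" unfolding m_def using fin x by (intro Max_in) auto
  then obtain a where a: "a \<in> S" "v a = m" by auto
  have "m \<le> (\<Sum>k\<in>S. A a k * v k)" using v_sub[OF a(1)] a(2) by simp
  also have "\<dots> \<le> (\<Sum>k\<in>S. A a k) * m"
    unfolding sum_distrib_right by (rule sum_mono) (use A_nonneg[OF a(1)] v_le in \<open>simp add: mult_left_mono\<close>)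
  also have "\<dots> < m" using rows[OF a(1)] m_pos by simp
  finally show False by simp
qed

lemma substochastic_harmonic_zero:
  fixes A :: "'a \<Rightarrow> 'a \<Rightarrow> real"
  assumes "finite S" "x \<in> S"
    and "\<And>a k. a \<in> S \<Longrightarrow> k \<in> S \<Longrightarrow> A a k \<ge> 0"
    and "\<And>a. a \<in> S \<Longrightarrow> (\<Sum>k\<in>S. A a k) < 1"
    and harmonic: "\<And>a. a \<in> S \<Longrightarrow> h a = (\<Sum>k\<in>S. A a k * h k)"
  shows "h x = 0"
proof -
  have "h x \<le> 0"
    by (rule substochastic_subsolution_nonpos[of S x A]) (use assms in auto)
  moreover have "- h x \<le> 0"
    by (rule substochastic_subsolution_nonpos[of S x A]) (use assms in \<open>auto simp: sum_negf\<close>)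
  ultimately show ?thesis by simp
qed

lemma substochastic_eliminate:
  fixes A :: "'a \<Rightarrow> 'a \<Rightarrow> real"
  assumes fin: "finite S" and y: "y \<notin> S" and x: "x \<in> S"
    and A_nonneg: "\<And>a k. a \<in> insert y S \<Longrightarrow> k \<in> insert y S \<Longrightarrow> A a k \<ge> 0"
    and rows: "\<And>a. a \<in> insert y S \<Longrightarrow> (\<Sum>k\<in>insert y S. A a k) < 1"
  shows "\<forall>k\<in>S. A x k + A x y * A y k / (1 - A y y) \<ge> 0"
    and "(\<Sum>k\<in>S. A x k + A x y * A y k / (1 - A y y)) < 1"
proof -
  have row_y: "A y y + (\<Sum>k\<in>S. A y k) < 1" using rows[of y] fin y by simp
  have "(\<Sum>k\<in>S. A y k) \<ge> 0" using A_nonneg by (auto intro: sum_nonneg)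
  then have Ayy: "A y y < 1" using row_y by linarith
  then have ratio: "(\<Sum>k\<in>S. A y k) / (1 - A y y) \<le> 1" using row_y by simp
  show "\<forall>k\<in>S. A x k + A x y * A y k / (1 - A y y) \<ge> 0" using A_nonneg x Ayy by auto
  have "(\<Sum>k\<in>S. A x k + A x y * A y k / (1 - A y y))
      = (\<Sum>k\<in>S. A x k) + A x y * ((\<Sum>k\<in>S. A y k) / (1 - A y y))"
    by (simp add: sum.distrib sum_distrib_left sum_divide_distrib)
  also have "\<dots> \<le> (\<Sum>k\<in>S. A x k) + A x y"
    using mult_left_le[OF ratio, of "A x y"] A_nonneg[of x y] x by simp
  also have "\<dots> < 1" using rows[of x] fin x y by (simp add: add.commute)
  finally show "(\<Sum>k\<in>S. A x k + A x y * A y k / (1 - A y y)) < 1" .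
qed

lemma eliminate_back_substitute:
  fixes A :: "'a \<Rightarrow> 'a \<Rightarrow> real"
  assumes fin: "finite S" and y: "y \<notin> S" and a: "A y y \<noteq> 1"
    and u': "\<And>x. x \<in> S \<Longrightarrow> u' x = (\<Sum>k\<in>S. (A x k + A x y * A y k / (1 - A y y)) * u' k)
                                   + (b x + A x y * b y / (1 - A y y))"
    and u: "u = u'(y := ((\<Sum>k\<in>S. A y k * u' k) + b y) / (1 - A y y))"
    and x: "x \<in> insert y S"
  shows "u x = (\<Sum>k\<in>insert y S. A x k * u k) + b x"
proof -
  have sum_u: "(\<Sum>k\<in>insert y S. f k * u k) = f y * u y + (\<Sum>k\<in>S. f k * u' k)" for f
    using fin y unfolding u by (auto intro: sum.cong)
  have u_y: "u y * (1 - A y y) = (\<Sum>k\<in>S. A y k * u' k) + b y" unfolding u using a by simp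
  consider "x = y" | "x \<in> S" "x \<noteq> y" using x y by auto
  then show ?thesis
  proof cases
    case 1
    then show ?thesis unfolding sum_u using u_y by (simp add: algebra_simps)
  next
    case 2
    have "(\<Sum>k\<in>S. (A x k + A x y * A y k / (1 - A y y)) * u' k)
        = (\<Sum>k\<in>S. A x k * u' k) + A x y * (\<Sum>k\<in>S. A y k * u' k) / (1 - A y y)"
      unfolding distrib_right sum.distrib sum_distrib_left sum_divide_distrib
      by (auto intro!: sum.cong)
    then have "u' x = (\<Sum>k\<in>S. A x k * u' k) + A x y * u y + b x"
      unfolding u'[OF 2(1)] u by (simp add: add_divide_distrib distrib_left)
    then show ?thesis unfolding sum_u using 2 u by simp
  qed
qed

text \<open>Gaussian elimination of one node keeps the system substochastic.\<close>
lemma substochastic_system_solvable: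
  fixes A :: "'a \<Rightarrow> 'a \<Rightarrow> real"
  assumes "finite S"
    and "\<And>a k. a \<in> S \<Longrightarrow> k \<in> S \<Longrightarrow> A a k \<ge> 0"
    and "\<And>a. a \<in> S \<Longrightarrow> (\<Sum>k\<in>S. A a k) < 1"
  shows "\<exists>u. \<forall>x\<in>S. u x = (\<Sum>k\<in>S. A x k * u k) + b x"
  using assms
proof (induction S arbitrary: A b rule: finite_induct)
  case empty
  then show ?case by simp
next
  case (insert y S)
  define A' where "A' x k = A x k + A x y * A y k / (1 - A y y)" for x k
  have "A y y + (\<Sum>k\<in>S. A y k) < 1" using insert.prems(2)[of y] insert.hyps by simp
  moreover have "(\<Sum>k\<in>S. A y k) \<ge> 0" using insert.prems(1) by (auto intro: sum_nonneg)
  ultimately have "A y y \<noteq> 1" by linarith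
  have "\<forall>k\<in>S. A' x k \<ge> 0" if "x \<in> S" for x
    unfolding A'_def using insert.hyps that insert.prems by (rule substochastic_eliminate(1))
  moreover have "(\<Sum>k\<in>S. A' x k) < 1" if "x \<in> S" for x
    unfolding A'_def using insert.hyps that insert.prems by (rule substochastic_eliminate(2))
  ultimately obtain u' where u': "\<forall>x\<in>S. u' x = (\<Sum>k\<in>S. A' x k * u' k) + (b x + A x y * b y / (1 - A y y))"
    using insert.IH[of A' "\<lambda>x. b x + A x y * b y / (1 - A y y)"] by blast
  show ?case
    using eliminate_back_substitute[of S y A u' b, OF insert.hyps \<open>A y y \<noteq> 1\<close> _ refl] u'
    unfolding A'_def by blast
qed

section \<open>Elementary estimates\<close>

lemma powr_mult_le_inverse_neg_ln:
  fixes \<alpha> s :: real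
  assumes "0 < \<alpha>" "\<alpha> < 1" "s \<ge> 0"
  shows "\<alpha> powr s * s \<le> 1 / - ln \<alpha>"
proof -
  define l where "l = - ln \<alpha>"
  have l: "l > 0" unfolding l_def using assms by simp
  have "\<alpha> powr s * s = s / exp (s * l)"
    unfolding l_def powr_def using assms by (simp add: exp_minus divide_inverse mult.commute)
  also have "\<dots> \<le> 1 / l"
  proof -
    have "l * s \<le> exp (l * s)" using exp_ge_add_one_self[of "l * s"] by linarith
    then show ?thesis using l by (simp add: divide_le_eq le_divide_eq mult.commute)
  qed
  finally show ?thesis unfolding l_def .
qed

lemma powr_mult_two_powr_le:
  fixes \<alpha> s L :: real
  assumes "0 < \<alpha>" "\<alpha> \<le> 1/2" "s \<ge> 0"
  shows "\<alpha> powr s * 2 powr L \<le> 2 powr (L - s)"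
proof -
  have "\<alpha> powr s \<le> (1/2) powr s" using assms by (intro powr_mono2) auto
  also have "(1/2 :: real) powr s = 1 / 2 powr s" by (simp add: powr_divide)
  finally have "\<alpha> powr s * 2 powr L \<le> 2 powr L / 2 powr s"
    using mult_right_mono[of _ _ "2 powr L"] by fastforce
  then show ?thesis by (simp add: powr_diff)
qed

lemma tendsto_inverse_neg_ln_at_right_0: "((\<lambda>\<alpha>::real. 1 / - ln \<alpha>) \<longlongrightarrow> 0) (at_right 0)"
proof -
  have "filterlim (\<lambda>\<alpha>::real. - ln \<alpha>) at_top (at_right 0)"
    using ln_at_0 filterlim_uminus_at_bot by blast
  then show ?thesis unfolding inverse_eq_divide[symmetric] by (rule tendsto_inverse_0_at_top)
qed

section \<open>Paths and shortest distances\<close>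

lemma dpath_Cons:
  "dpath V P Fs x t (x # y # ys) \<longleftrightarrow>
     x \<in> V - Fs \<and> x \<notin> set (y # ys) \<and> P x y > 0 \<and> dpath V P Fs y t (y # ys)"
  unfolding dpath_def by (simp add: All_less_Suc2) blast

lemma dpath_singleton: "dpath V P Fs x t [x] \<longleftrightarrow> x = t \<and> t \<in> V - Fs"
  unfolding dpath_def by auto

lemma path_cost_Cons: "path_cost w (x # y # ys) = w x y + path_cost w (y # ys)"
  unfolding path_cost_def by (simp add: sum.lessThan_Suc_shift del: sum.lessThan_Suc)

definition path_prob :: "('v \<Rightarrow> 'v \<Rightarrow> real) \<Rightarrow> 'v list \<Rightarrow> real" where
  "path_prob P xs = (\<Prod>k < length xs - 1. P (xs ! k) (xs ! Suc k))"

lemma path_prob_Cons: "path_prob P (x # y # ys) = P x y * path_prob P (y # ys)"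
  unfolding path_prob_def by (simp add: prod.lessThan_Suc_shift del: prod.lessThan_Suc)

lemma finite_dpaths: "finite V \<Longrightarrow> finite {xs. dpath V P Fs s t xs}"
  by (rule finite_subset[OF _ finite_subset_distinct]) (auto simp: dpath_def)

locale evaporating_network =
  fixes V :: "'v set" and P w :: "'v \<Rightarrow> 'v \<Rightarrow> real" and t :: 'v and Fs :: "'v set"
  assumes finite_V: "finite V"
    and P_nonneg: "\<And>i j. i \<in> V \<Longrightarrow> j \<in> V \<Longrightarrow> P i j \<ge> 0"
    and P_row_sum: "\<And>i. i \<in> V \<Longrightarrow> (\<Sum>j\<in>V. P i j) = 1"
    and w_pos: "\<And>i j. i \<in> V \<Longrightarrow> j \<in> V \<Longrightarrow> P i j > 0 \<Longrightarrow> w i j > 0"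
    and t_in_V: "t \<in> V"
    and Fs_subset: "Fs \<subseteq> V - {t}"
begin

definition T :: "'v set" where "T = transient V t Fs"

definition R :: "'v set" where "R = {x \<in> T. \<exists>xs. dpath V P Fs x t xs}"

abbreviation Rt :: "'v set" where "Rt \<equiv> R \<union> {t}"

definition L :: "'v \<Rightarrow> real" where "L x = Lmin V P w Fs x t"

lemma T_eq: "T = V - ({t} \<union> Fs)"
  unfolding T_def transient_def ..

lemma finite_T: "finite T"
  using finite_V unfolding T_eq by simp

lemma t_notin_T: "t \<notin> T" and Fs_disjoint_T: "x \<in> Fs \<Longrightarrow> x \<notin> T"
  unfolding T_eq by auto

lemma R_subset_T: "R \<subseteq> T"
  unfolding R_def by auto

lemma Rt_subset_V: "Rt \<subseteq> V"
  using R_subset_T t_in_V unfolding T_eq by auto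

lemma finite_Rt: "finite Rt"
  using finite_V Rt_subset_V finite_subset by blast

lemma path_cost_nonneg:
  assumes "dpath V P Fs x y xs"
  shows "path_cost w xs \<ge> 0"
proof -
  have "w (xs ! k) (xs ! Suc k) > 0" if k: "k < length xs - 1" for k
  proof (rule w_pos)
    have "xs ! k \<in> set xs" "xs ! Suc k \<in> set xs" using k by simp_all
    then show "xs ! k \<in> V" "xs ! Suc k \<in> V" using assms unfolding dpath_def by auto
    show "P (xs ! k) (xs ! Suc k) > 0" using assms k unfolding dpath_def by simp
  qed
  then show ?thesis unfolding path_cost_def by (auto intro: sum_nonneg less_imp_le)
qed

lemma dpath_suffix:
  assumes "dpath V P Fs a t ys" and "x \<in> set ys"
  shows "\<exists>zs. dpath V P Fs x t zs \<and> path_cost w zs \<le> path_cost w ys"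
  using assms
proof (induction ys arbitrary: a)
  case Nil
  then show ?case by simp
next
  case (Cons b ys)
  show ?case
  proof (cases "x = b")
    case True
    then show ?thesis using Cons.prems by (intro exI[of _ "b # ys"]) (auto simp: dpath_def)
  next
    case False
    then obtain c zs where ys: "ys = c # zs" using Cons.prems(2) by (cases ys) auto
    have b: "b = a" using Cons.prems(1) by (simp add: dpath_def)
    have path: "dpath V P Fs c t ys" and edge: "P b c > 0" "b \<in> V" "c \<in> V"
      using Cons.prems(1) unfolding b ys dpath_Cons by (auto simp: dpath_def)
    obtain zs' where "dpath V P Fs x t zs'" "path_cost w zs' \<le> path_cost w ys"
      using Cons.IH[OF path] False Cons.prems(2) by auto
    moreover have "path_cost w ys \<le> path_cost w (b # ys)"
      using w_pos[OF edge(2,3,1)] unfolding ys path_cost_Cons by simp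
    ultimately show ?thesis by force
  qed
qed

lemma L_le: "dpath V P Fs x t xs \<Longrightarrow> L x \<le> path_cost w xs"
  unfolding L_def Lmin_def using finite_dpaths[OF finite_V] by (auto intro: Min_le)

lemma dpath_t: "dpath V P Fs t t [t]"
  using t_in_V Fs_subset by (auto simp: dpath_singleton)

lemma Rt_iff_dpath: "x \<in> Rt \<longleftrightarrow> (\<exists>xs. dpath V P Fs x t xs)"
proof -
  have "x \<in> V - Fs" if "dpath V P Fs x t xs" for xs
    using that unfolding dpath_def by (cases xs) auto
  then show ?thesis using dpath_t unfolding R_def T_eq by auto
qed

lemma L_attained:
  assumes "x \<in> Rt"
  shows "\<exists>xs. dpath V P Fs x t xs \<and> path_cost w xs = L x"
proof -
  have "{xs. dpath V P Fs x t xs} \<noteq> {}" using assms Rt_iff_dpath by auto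
  then have "L x \<in> path_cost w ` {xs. dpath V P Fs x t xs}"
    unfolding L_def Lmin_def using finite_dpaths[OF finite_V] by (intro Min_in) auto
  then show ?thesis by auto
qed

lemma L_nonneg: "x \<in> Rt \<Longrightarrow> L x \<ge> 0"
  using L_attained path_cost_nonneg by metis

lemma L_t: "L t = 0"
  using L_le[OF dpath_t] L_nonneg[of t] by (simp add: path_cost_def)

text \<open>Prepend x to a shortest path from i or, if that path already visits x, cut it there.\<close>
lemma L_bellman:
  assumes x: "x \<in> T" and i: "i \<in> Rt" and edge: "P x i > 0"
  shows "x \<in> R \<and> L x \<le> w x i + L i"
proof -
  obtain ys where ys: "dpath V P Fs i t ys" "path_cost w ys = L i"
    using L_attained[OF i] by auto
  then obtain zs where ys_eq: "ys = i # zs" unfolding dpath_def by (cases ys) auto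
  have x_V: "x \<in> V - Fs" and i_V: "i \<in> V" using x i Rt_subset_V unfolding T_eq by auto
  have w_xi: "w x i > 0" using w_pos[OF _ i_V edge] x_V by simp
  obtain xs where xs: "dpath V P Fs x t xs" "path_cost w xs \<le> w x i + L i"
  proof (cases "x \<in> set ys")
    case True
    then show ?thesis using dpath_suffix[OF ys(1)] ys(2) w_xi that by force
  next
    case False
    then have "dpath V P Fs x t (x # ys)" using ys(1) x_V edge by (simp add: ys_eq dpath_Cons)
    then show ?thesis using that ys(2) by (simp add: ys_eq path_cost_Cons)
  qed
  then show ?thesis using L_le[OF xs(1)] x unfolding R_def by auto
qed

section \<open>Absorption probability and cost\<close>

lemma sum_V_split: "(\<Sum>i\<in>V. f i) = (\<Sum>i\<in>T. f i) + f t + (\<Sum>i\<in>Fs. f i)"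
proof -
  have fin_Fs: "finite Fs" using Fs_subset finite_V finite_subset by blast
  have "V = T \<union> insert t Fs" using t_in_V Fs_subset unfolding T_eq by auto
  then have "(\<Sum>i\<in>V. f i) = (\<Sum>i\<in>T \<union> insert t Fs. f i)" by simp
  also have "\<dots> = (\<Sum>i\<in>T. f i) + (\<Sum>i\<in>insert t Fs. f i)"
    by (rule sum.union_disjoint) (use finite_T fin_Fs t_notin_T Fs_disjoint_T in auto)
  also have "(\<Sum>i\<in>insert t Fs. f i) = f t + (\<Sum>i\<in>Fs. f i)"
    using fin_Fs Fs_subset by (subst sum.insert) auto
  finally show ?thesis by (simp only: add.assoc)
qed

lemma Pev_nonneg: "i \<in> V \<Longrightarrow> j \<in> V \<Longrightarrow> 0 < \<alpha> \<Longrightarrow> Pev P w \<alpha> i j \<ge> 0"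
  unfolding Pev_def using P_nonneg by simp

lemma Pev_eq_0: "i \<in> V \<Longrightarrow> j \<in> V \<Longrightarrow> \<not> P i j > 0 \<Longrightarrow> Pev P w \<alpha> i j = 0"
  unfolding Pev_def using P_nonneg by (metis order.not_eq_order_implies_strict mult_eq_0_iff)

lemma Pev_less:
  assumes "i \<in> V" "j \<in> V" "P i j > 0" "0 < \<alpha>" "\<alpha> < 1"
  shows "Pev P w \<alpha> i j < P i j"
  using powr01_less_one[OF assms(4,5)] w_pos[OF assms(1-3)] assms(3) unfolding Pev_def by simp

lemma Pev_le: "i \<in> V \<Longrightarrow> j \<in> V \<Longrightarrow> 0 < \<alpha> \<Longrightarrow> \<alpha> < 1 \<Longrightarrow> Pev P w \<alpha> i j \<le> P i j"
  using Pev_less Pev_eq_0 P_nonneg by (metis less_imp_le)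

text \<open>Strict, because some edge out of x is damped by the factor \<alpha> powr w < 1.\<close>
lemma transient_row_sum_less_1:
  assumes S: "S \<subseteq> T" and x: "x \<in> S" and \<alpha>: "0 < \<alpha>" "\<alpha> < 1"
  shows "(\<Sum>k\<in>S. Pev P w \<alpha> x k) < 1"
proof -
  have x_V: "x \<in> V" and S_V: "S \<subseteq> V" using S x unfolding T_eq by auto
  obtain j where j: "j \<in> V" "P x j > 0"
    using P_row_sum[OF x_V] P_nonneg[OF x_V] sum_nonneg_eq_0_iff[OF finite_V]
    by (metis less_eq_real_def zero_neq_one)
  have "(\<Sum>k\<in>S. Pev P w \<alpha> x k) \<le> (\<Sum>k\<in>V. Pev P w \<alpha> x k)"
    using S_V finite_V Pev_nonneg[OF x_V _ \<alpha>(1)] by (intro sum_mono2) auto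
  also have "\<dots> < (\<Sum>k\<in>V. P x k)"
    using Pev_le[OF x_V _ \<alpha>] Pev_less[OF x_V j \<alpha>] j(1)
    by (intro sum_strict_mono_ex1[OF finite_V]) auto
  finally show ?thesis using P_row_sum[OF x_V] by simp
qed

lemma transient_subharmonic_nonpos:
  assumes S: "S \<subseteq> T" and x: "x \<in> S" and \<alpha>: "0 < \<alpha>" "\<alpha> < 1"
    and v: "\<And>y. y \<in> S \<Longrightarrow> v y \<le> (\<Sum>k\<in>S. Pev P w \<alpha> y k * v k)"
  shows "v x \<le> 0"
proof (rule substochastic_subsolution_nonpos[OF finite_subset[OF S finite_T] x _ _ v])
  have "S \<subseteq> V" using S unfolding T_eq by auto
  then show "\<And>a k. a \<in> S \<Longrightarrow> k \<in> S \<Longrightarrow> Pev P w \<alpha> a k \<ge> 0"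
    using Pev_nonneg[OF _ _ \<alpha>(1)] by blast
qed (use transient_row_sum_less_1[OF S _ \<alpha>] in simp)

lemma transient_harmonic_zero:
  assumes S: "S \<subseteq> T" and x: "x \<in> S" and \<alpha>: "0 < \<alpha>" "\<alpha> < 1"
    and h: "\<And>y. y \<in> S \<Longrightarrow> h y = (\<Sum>k\<in>S. Pev P w \<alpha> y k * h k)"
  shows "h x = 0"
proof (rule substochastic_harmonic_zero[OF finite_subset[OF S finite_T] x _ _ h])
  have "S \<subseteq> V" using S unfolding T_eq by auto
  then show "\<And>a k. a \<in> S \<Longrightarrow> k \<in> S \<Longrightarrow> Pev P w \<alpha> a k \<ge> 0"
    using Pev_nonneg[OF _ _ \<alpha>(1)] by blast
qed (use transient_row_sum_less_1[OF S _ \<alpha>] in simp)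

definition is_fundmat :: "real \<Rightarrow> ('v \<Rightarrow> 'v \<Rightarrow> real) \<Rightarrow> bool" where
  "is_fundmat \<alpha> F \<longleftrightarrow>
     (\<forall>s\<in>T. \<forall>m\<in>T. F s m - (\<Sum>k\<in>T. Pev P w \<alpha> s k * F k m) = (if s = m then 1 else 0))
   \<and> (\<forall>s m. s \<notin> T \<or> m \<notin> T \<longrightarrow> F s m = 0)"

lemma ex_is_fundmat:
  assumes \<alpha>: "0 < \<alpha>" "\<alpha> < 1"
  shows "\<exists>F. is_fundmat \<alpha> F"
proof -
  have "\<exists>u. \<forall>x\<in>T. u x = (\<Sum>k\<in>T. Pev P w \<alpha> x k * u k) + (if x = m then 1 else 0)" for m
    using Pev_nonneg[OF _ _ \<alpha>(1)] transient_row_sum_less_1[OF order_refl _ \<alpha>] unfolding T_eq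
    by (intro substochastic_system_solvable) (auto simp: finite_V)
  then obtain u where u: "\<And>m x. x \<in> T \<Longrightarrow>
      u m x = (\<Sum>k\<in>T. Pev P w \<alpha> x k * u m k) + (if x = m then 1 else 0)"
    by metis
  have "is_fundmat \<alpha> (\<lambda>s m. if s \<in> T \<and> m \<in> T then u m s else 0)"
    unfolding is_fundmat_def using u by (auto cong: sum.cong)
  then show ?thesis by blast
qed

lemma is_fundmat_unique:
  assumes \<alpha>: "0 < \<alpha>" "\<alpha> < 1" and F1: "is_fundmat \<alpha> F1" and F2: "is_fundmat \<alpha> F2"
  shows "F1 = F2"
proof (intro ext)
  fix s m
  show "F1 s m = F2 s m"
  proof (cases "s \<in> T \<and> m \<in> T")
    case True
    have "F1 s m - F2 s m = 0"
    proof (rule transient_harmonic_zero[OF order_refl conjunct1[OF True] \<alpha>])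
      fix x assume "x \<in> T"
      then have "F1 x m - (\<Sum>k\<in>T. Pev P w \<alpha> x k * F1 k m)
          = F2 x m - (\<Sum>k\<in>T. Pev P w \<alpha> x k * F2 k m)"
        using F1 F2 True unfolding is_fundmat_def by auto
      then show "F1 x m - F2 x m = (\<Sum>k\<in>T. Pev P w \<alpha> x k * (F1 k m - F2 k m))"
        by (simp add: right_diff_distrib sum_subtractf)
    qed
    then show ?thesis by simp
  next
    case False
    then show ?thesis using F1 F2 unfolding is_fundmat_def by auto
  qed
qed

lemma is_fundmat_fundmat:
  assumes "0 < \<alpha>" "\<alpha> < 1"
  shows "is_fundmat \<alpha> (fundmat V P w \<alpha> t Fs)"
proof -
  have "fundmat V P w \<alpha> t Fs = (THE F. is_fundmat \<alpha> F)"
    unfolding fundmat_def is_fundmat_def T_def ..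
  then show ?thesis
    using theI'[of "is_fundmat \<alpha>"] ex_is_fundmat[OF assms] is_fundmat_unique[OF assms] by metis
qed

lemma fundmat_first_step:
  assumes \<alpha>: "0 < \<alpha>" "\<alpha> < 1" and x: "x \<in> T"
  shows "(\<Sum>m\<in>T. fundmat V P w \<alpha> t Fs x m * b m)
       = b x + (\<Sum>k\<in>T. Pev P w \<alpha> x k * (\<Sum>m\<in>T. fundmat V P w \<alpha> t Fs k m * b m))"
proof -
  let ?F = "fundmat V P w \<alpha> t Fs"
  have F: "?F x m = (if x = m then 1 else 0) + (\<Sum>k\<in>T. Pev P w \<alpha> x k * ?F k m)" if "m \<in> T" for m
    using is_fundmat_fundmat[OF \<alpha>] x that unfolding is_fundmat_def by (auto simp: algebra_simps)
  have "(\<Sum>m\<in>T. ?F x m * b m)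
      = (\<Sum>m\<in>T. (if x = m then b m else 0) + (\<Sum>k\<in>T. Pev P w \<alpha> x k * ?F k m * b m))"
    by (intro sum.cong refl) (simp add: F distrib_right sum_distrib_right)
  also have "\<dots> = b x + (\<Sum>m\<in>T. \<Sum>k\<in>T. Pev P w \<alpha> x k * ?F k m * b m)"
    using x finite_T by (simp add: sum.distrib)
  also have "(\<Sum>m\<in>T. \<Sum>k\<in>T. Pev P w \<alpha> x k * ?F k m * b m)
      = (\<Sum>k\<in>T. Pev P w \<alpha> x k * (\<Sum>m\<in>T. ?F k m * b m))"
    by (subst sum.swap) (simp add: sum_distrib_left mult.assoc)
  finally show ?thesis .
qed

abbreviation Q :: "real \<Rightarrow> 'v \<Rightarrow> real" where
  "Q \<alpha> \<equiv> absQ V P w \<alpha> t Fs"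

definition C :: "real \<Rightarrow> 'v \<Rightarrow> real" where
  "C \<alpha> m = (\<Sum>i\<in>V. Pev P w \<alpha> m i * w m i * Q \<alpha> i)"

definition N :: "real \<Rightarrow> 'v \<Rightarrow> real" where
  "N \<alpha> x = (if x \<in> T then (\<Sum>m\<in>T. fundmat V P w \<alpha> t Fs x m * C \<alpha> m) else 0)"

lemma Q_t: "Q \<alpha> t = 1"
  unfolding absQ_def by simp

lemma Q_Fs: "x \<in> Fs \<Longrightarrow> Q \<alpha> x = 0"
  using Fs_subset unfolding absQ_def transient_def by auto

lemma N_not_T: "x \<notin> T \<Longrightarrow> N \<alpha> x = 0"
  unfolding N_def by simp

lemma Q_first_step:
  assumes \<alpha>: "0 < \<alpha>" "\<alpha> < 1" and x: "x \<in> T"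
  shows "Q \<alpha> x = Pev P w \<alpha> x t + (\<Sum>k\<in>T. Pev P w \<alpha> x k * Q \<alpha> k)"
proof -
  have "Q \<alpha> y = (\<Sum>m\<in>T. fundmat V P w \<alpha> t Fs y m * Pev P w \<alpha> m t)" if "y \<in> T" for y
    using that t_notin_T unfolding absQ_def T_def by auto
  then show ?thesis
    using fundmat_first_step[OF \<alpha> x, of "\<lambda>m. Pev P w \<alpha> m t"] x by (simp cong: sum.cong)
qed

lemma Q_harmonic:
  assumes "0 < \<alpha>" "\<alpha> < 1" "x \<in> T"
  shows "Q \<alpha> x = (\<Sum>i\<in>V. Pev P w \<alpha> x i * Q \<alpha> i)"
  using Q_first_step[OF assms] sum_V_split[of "\<lambda>i. Pev P w \<alpha> x i * Q \<alpha> i"] Q_t Q_Fs by simp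

lemma N_first_step:
  assumes \<alpha>: "0 < \<alpha>" "\<alpha> < 1" and x: "x \<in> T"
  shows "N \<alpha> x = (\<Sum>i\<in>V. Pev P w \<alpha> x i * (N \<alpha> i + w x i * Q \<alpha> i))"
proof -
  have "N \<alpha> x = C \<alpha> x + (\<Sum>k\<in>T. Pev P w \<alpha> x k * N \<alpha> k)"
    using fundmat_first_step[OF \<alpha> x, of "C \<alpha>"] x unfolding N_def by (simp cong: sum.cong)
  also have "(\<Sum>k\<in>T. Pev P w \<alpha> x k * N \<alpha> k) = (\<Sum>i\<in>V. Pev P w \<alpha> x i * N \<alpha> i)"
    using sum_V_split[of "\<lambda>i. Pev P w \<alpha> x i * N \<alpha> i"] N_not_T[OF t_notin_T] N_not_T[OF Fs_disjoint_T]
    by simp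
  finally show ?thesis unfolding C_def by (simp add: sum.distrib distrib_left mult.assoc)
qed

lemma Q_nonneg:
  assumes \<alpha>: "0 < \<alpha>" "\<alpha> < 1"
  shows "Q \<alpha> x \<ge> 0"
proof (cases "x \<in> T")
  case True
  have "- Q \<alpha> x \<le> 0"
  proof (rule transient_subharmonic_nonpos[OF order_refl True \<alpha>])
    fix y assume y: "y \<in> T"
    have "Pev P w \<alpha> y t \<ge> 0" using Pev_nonneg[OF _ t_in_V \<alpha>(1)] y unfolding T_eq by auto
    then show "- Q \<alpha> y \<le> (\<Sum>k\<in>T. Pev P w \<alpha> y k * - Q \<alpha> k)"
      using Q_first_step[OF \<alpha> y] by (simp add: sum_negf)
  qed
  then show ?thesis by simp
next
  case False
  then show ?thesis unfolding absQ_def T_def by simp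
qed

lemma Pev_to_Rt_eq_0: "x \<in> T - R \<Longrightarrow> i \<in> Rt \<Longrightarrow> Pev P w \<alpha> x i = 0"
  using L_bellman Pev_eq_0 Rt_subset_V unfolding T_eq by blast

lemma harmonic_off_R_zero:
  assumes \<alpha>: "0 < \<alpha>" "\<alpha> < 1" and x: "x \<in> T - R"
    and f_Fs: "\<And>i. i \<in> Fs \<Longrightarrow> f i = 0"
    and f_harmonic: "\<And>y. y \<in> T - R \<Longrightarrow> f y = (\<Sum>i\<in>V. Pev P w \<alpha> y i * f i)"
  shows "f x = 0"
proof (rule transient_harmonic_zero[OF Diff_subset x \<alpha>])
  fix y assume y: "y \<in> T - R"
  have "V - (T - R) \<subseteq> Rt \<union> Fs" unfolding T_eq by auto
  then have "(\<Sum>i\<in>V. Pev P w \<alpha> y i * f i) = (\<Sum>i\<in>T - R. Pev P w \<alpha> y i * f i)"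
    using Pev_to_Rt_eq_0[OF y] f_Fs
    by (intro sum.mono_neutral_right[OF finite_V]) (auto simp: T_eq)
  then show "f y = (\<Sum>k\<in>T - R. Pev P w \<alpha> y k * f k)" using f_harmonic[OF y] by simp
qed

lemma Q_off_R: "0 < \<alpha> \<Longrightarrow> \<alpha> < 1 \<Longrightarrow> x \<in> T - R \<Longrightarrow> Q \<alpha> x = 0"
  using harmonic_off_R_zero Q_Fs Q_harmonic by blast

lemma N_off_R:
  assumes \<alpha>: "0 < \<alpha>" "\<alpha> < 1" and x: "x \<in> T - R"
  shows "N \<alpha> x = 0"
proof (rule harmonic_off_R_zero[OF \<alpha> x])
  show "\<And>i. i \<in> Fs \<Longrightarrow> N \<alpha> i = 0" using N_not_T Fs_disjoint_T by blast
  fix y assume y: "y \<in> T - R"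
  have "Pev P w \<alpha> y i = 0 \<or> Q \<alpha> i = 0" if "i \<in> V" for i
  proof -
    have "i \<in> Rt \<or> i \<in> T - R \<or> i \<in> Fs" using that unfolding T_eq by auto
    then show ?thesis using Pev_to_Rt_eq_0[OF y] Q_off_R[OF \<alpha>] Q_Fs by auto
  qed
  then have "(\<Sum>i\<in>V. Pev P w \<alpha> y i * (N \<alpha> i + w y i * Q \<alpha> i)) = (\<Sum>i\<in>V. Pev P w \<alpha> y i * N \<alpha> i)"
    by (intro sum.cong refl) auto
  then show "N \<alpha> y = (\<Sum>i\<in>V. Pev P w \<alpha> y i * N \<alpha> i)"
    using N_first_step[OF \<alpha>, of y] y by simp
qed

lemma sum_V_eq_sum_Rt:
  fixes f g :: "'v \<Rightarrow> real"
  assumes "\<And>i. i \<in> T - R \<Longrightarrow> f i = 0" "\<And>i. i \<in> Fs \<Longrightarrow> f i = 0"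
  shows "(\<Sum>i\<in>V. g i * f i) = (\<Sum>i\<in>Rt. g i * f i)"
proof (rule sum.mono_neutral_right[OF finite_V Rt_subset_V], intro ballI)
  fix i assume "i \<in> V - Rt"
  then have "i \<in> T - R \<or> i \<in> Fs" unfolding T_eq by auto
  then show "g i * f i = 0" using assms by auto
qed

lemma avoidU_eq:
  assumes \<alpha>: "0 < \<alpha>" "\<alpha> < 1" and s: "s \<in> T"
  shows "avoidU V P w \<alpha> t Fs s = N \<alpha> s / Q \<alpha> s"
proof -
  let ?F = "fundmat V P w \<alpha> t Fs"
  txt \<open>The terms with Q m = 0, which avoidU omits, vanish anyway.\<close>
  have C_eq_0: "C \<alpha> m = 0" if m: "m \<in> T" "Q \<alpha> m = 0" for m
  proof -
    have m_V: "m \<in> V" using m unfolding T_eq by auto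
    have nonneg: "\<And>i. i \<in> V \<Longrightarrow> Pev P w \<alpha> m i * Q \<alpha> i \<ge> 0"
      using Pev_nonneg[OF m_V _ \<alpha>(1)] Q_nonneg[OF \<alpha>] by simp
    have "(\<Sum>i\<in>V. Pev P w \<alpha> m i * Q \<alpha> i) = 0" using Q_harmonic[OF \<alpha> m(1)] m(2) by simp
    then have "\<forall>i\<in>V. Pev P w \<alpha> m i = 0 \<or> Q \<alpha> i = 0"
      using nonneg by (subst (asm) sum_nonneg_eq_0_iff[OF finite_V]) auto
    then show ?thesis unfolding C_def by (auto intro!: sum.neutral)
  qed
  have "avoidU V P w \<alpha> t Fs s = (\<Sum>m\<in>{m\<in>T. Q \<alpha> m \<noteq> 0}. ?F s m * C \<alpha> m / Q \<alpha> s)"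
    unfolding avoidU_def rcost_def C_def T_def[symmetric] by (intro sum.cong refl) simp
  also have "\<dots> = (\<Sum>m\<in>T. ?F s m * C \<alpha> m / Q \<alpha> s)"
    by (rule sum.mono_neutral_left) (use finite_T C_eq_0 in auto)
  also have "\<dots> = N \<alpha> s / Q \<alpha> s" unfolding N_def using s by (simp add: sum_divide_distrib)
  finally show ?thesis .
qed

section \<open>The rescaled chain\<close>

definition reduced_cost :: "'v \<Rightarrow> 'v \<Rightarrow> real" where
  "reduced_cost x i = w x i + L i - L x"

definition P_scaled :: "real \<Rightarrow> 'v \<Rightarrow> 'v \<Rightarrow> real" where
  "P_scaled \<alpha> x i = (if x = t then 0 else P x i * \<alpha> powr reduced_cost x i)"

definition Q_scaled :: "real \<Rightarrow> 'v \<Rightarrow> real" where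
  "Q_scaled \<alpha> x = Q \<alpha> x / \<alpha> powr L x"

definition D_scaled :: "real \<Rightarrow> 'v \<Rightarrow> real" where
  "D_scaled \<alpha> x = (N \<alpha> x - L x * Q \<alpha> x) / \<alpha> powr L x"

definition source :: "real \<Rightarrow> 'v \<Rightarrow> real" where
  "source \<alpha> x = (\<Sum>i\<in>Rt. P_scaled \<alpha> x i * reduced_cost x i * Q_scaled \<alpha> i)"

lemma Pev_scaled:
  assumes "\<alpha> > 0" and "x \<in> R"
  shows "Pev P w \<alpha> x i * Y / \<alpha> powr L x = P_scaled \<alpha> x i * (Y / \<alpha> powr L i)"
proof -
  have "x \<noteq> t" using assms(2) R_subset_T t_notin_T by auto
  moreover have "\<alpha> powr w x i * Y / \<alpha> powr L x = \<alpha> powr reduced_cost x i * (Y / \<alpha> powr L i)"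
    unfolding reduced_cost_def using assms(1) by (simp add: powr_diff powr_add field_simps)
  ultimately show ?thesis unfolding Pev_def P_scaled_def
    by (simp add: mult.assoc times_divide_eq_right[symmetric] del: times_divide_eq_right)
qed

lemma Q_scaled_t: "0 < \<alpha> \<Longrightarrow> Q_scaled \<alpha> t = 1"
  unfolding Q_scaled_def using Q_t L_t by simp

lemma D_scaled_t: "D_scaled \<alpha> t = 0"
  unfolding D_scaled_def using N_not_T[OF t_notin_T] L_t by simp

lemma Q_on_Rt:
  assumes \<alpha>: "0 < \<alpha>" "\<alpha> < 1" and x: "x \<in> T"
  shows "Q \<alpha> x = (\<Sum>i\<in>Rt. Pev P w \<alpha> x i * Q \<alpha> i)"
  using Q_harmonic[OF \<alpha> x] sum_V_eq_sum_Rt[of "Q \<alpha>" "Pev P w \<alpha> x"] Q_off_R[OF \<alpha>] Q_Fs by simp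

lemma N_on_Rt:
  assumes \<alpha>: "0 < \<alpha>" "\<alpha> < 1" and x: "x \<in> T"
  shows "N \<alpha> x = (\<Sum>i\<in>Rt. Pev P w \<alpha> x i * (N \<alpha> i + w x i * Q \<alpha> i))"
  using N_first_step[OF \<alpha> x] sum_V_eq_sum_Rt[of "\<lambda>i. N \<alpha> i + w x i * Q \<alpha> i" "Pev P w \<alpha> x"]
    Q_off_R[OF \<alpha>] N_off_R[OF \<alpha>] Q_Fs N_not_T Fs_disjoint_T by simp

lemma Q_scaled_harmonic:
  assumes \<alpha>: "0 < \<alpha>" "\<alpha> < 1" and x: "x \<in> R"
  shows "Q_scaled \<alpha> x = (\<Sum>i\<in>Rt. P_scaled \<alpha> x i * Q_scaled \<alpha> i)"
proof -
  have "Q_scaled \<alpha> x = (\<Sum>i\<in>Rt. Pev P w \<alpha> x i * Q \<alpha> i / \<alpha> powr L x)"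
    unfolding Q_scaled_def Q_on_Rt[OF \<alpha> subsetD[OF R_subset_T x]] by (simp add: sum_divide_distrib)
  then show ?thesis unfolding Q_scaled_def using Pev_scaled[OF \<alpha>(1) x] by simp
qed

lemma D_scaled_eq:
  assumes \<alpha>: "0 < \<alpha>" "\<alpha> < 1" and x: "x \<in> R"
  shows "D_scaled \<alpha> x = (\<Sum>i\<in>Rt. P_scaled \<alpha> x i * D_scaled \<alpha> i) + source \<alpha> x"
proof -
  have x_T: "x \<in> T" using x R_subset_T by auto
  have "N \<alpha> x - L x * Q \<alpha> x
      = (\<Sum>i\<in>Rt. Pev P w \<alpha> x i * ((N \<alpha> i - L i * Q \<alpha> i) + reduced_cost x i * Q \<alpha> i))"
    unfolding N_on_Rt[OF \<alpha> x_T] Q_on_Rt[OF \<alpha> x_T] sum_distrib_left sum_subtractf[symmetric]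
      reduced_cost_def
    by (intro sum.cong refl) (simp add: algebra_simps)
  then have "D_scaled \<alpha> x = (\<Sum>i\<in>Rt. Pev P w \<alpha> x i
      * ((N \<alpha> i - L i * Q \<alpha> i) + reduced_cost x i * Q \<alpha> i) / \<alpha> powr L x)"
    unfolding D_scaled_def by (simp add: sum_divide_distrib)
  also have "\<dots> = (\<Sum>i\<in>Rt. P_scaled \<alpha> x i * (D_scaled \<alpha> i + reduced_cost x i * Q_scaled \<alpha> i))"
    using Pev_scaled[OF \<alpha>(1) x] unfolding D_scaled_def Q_scaled_def
    by (intro sum.cong refl) (simp add: add_divide_distrib distrib_left)
  finally show ?thesis unfolding source_def by (simp add: sum.distrib algebra_simps)
qed

text \<open>The 1 inserted into the set of edge costs only keeps the minimum defined when G has no edges.\<close>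
definition w_min :: real where
  "w_min = Min (insert 1 {w a b | a b. a \<in> V \<and> b \<in> V \<and> P a b > 0})"

definition gap :: real where
  "gap = 1 - 2 powr (- w_min)"

definition Phi :: real where
  "Phi = Max ((\<lambda>x. 2 powr L x) ` Rt)"

lemma finite_edge_costs: "finite {w a b | a b. a \<in> V \<and> b \<in> V \<and> P a b > 0}"
proof -
  have "{w a b | a b. a \<in> V \<and> b \<in> V \<and> P a b > 0} \<subseteq> (\<lambda>(a, b). w a b) ` (V \<times> V)" by auto
  then show ?thesis using finite_V finite_subset by blast
qed

lemma w_min_pos: "w_min > 0"
  unfolding w_min_def using finite_edge_costs w_pos by (subst Min_gr_iff) auto

lemma w_min_le: "a \<in> V \<Longrightarrow> b \<in> V \<Longrightarrow> P a b > 0 \<Longrightarrow> w_min \<le> w a b"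
  unfolding w_min_def using finite_edge_costs by (intro Min_le) auto

lemma gap_pos: "gap > 0"
  unfolding gap_def using w_min_pos by (simp add: powr_less_one)

lemma gap_le_1: "gap \<le> 1"
  unfolding gap_def by simp

lemma two_powr_L_ge_1: "x \<in> Rt \<Longrightarrow> 2 powr L x \<ge> 1"
  using L_nonneg by (intro ge_one_powr_ge_zero) auto

lemma two_powr_L_le_Phi: "x \<in> Rt \<Longrightarrow> 2 powr L x \<le> Phi"
  unfolding Phi_def using finite_Rt by (intro Max_ge) auto

lemma Phi_ge_1: "Phi \<ge> 1"
  using two_powr_L_ge_1[of t] two_powr_L_le_Phi[of t] by simp

lemma P_scaled_nonneg: "x \<in> Rt \<Longrightarrow> i \<in> Rt \<Longrightarrow> P_scaled \<alpha> x i \<ge> 0"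
  unfolding P_scaled_def using P_nonneg subsetD[OF Rt_subset_V] by (auto intro!: mult_nonneg_nonneg)

lemma P_sum_Rt_le_1: "x \<in> V \<Longrightarrow> (\<Sum>i\<in>Rt. P x i) \<le> 1"
  using sum_mono2[OF finite_V Rt_subset_V, of "P x"] P_nonneg P_row_sum by simp

lemma reduced_cost_nonneg: "x \<in> T \<Longrightarrow> i \<in> Rt \<Longrightarrow> P x i > 0 \<Longrightarrow> reduced_cost x i \<ge> 0"
  using L_bellman unfolding reduced_cost_def by fastforce

lemma two_powr_L_superharmonic:
  assumes \<alpha>: "0 < \<alpha>" "\<alpha> \<le> 1/2" and x: "x \<in> Rt"
  shows "(\<Sum>i\<in>Rt. P_scaled \<alpha> x i * 2 powr L i) \<le> 2 powr L x - gap"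
proof (cases "x = t")
  case True
  then show ?thesis unfolding P_scaled_def using gap_le_1 L_t by simp
next
  case False
  then have x_T: "x \<in> T" and x_V: "x \<in> V" using x R_subset_T unfolding T_eq by auto
  have edge_bound: "P_scaled \<alpha> x i * 2 powr L i \<le> P x i * 2 powr (L x - w_min)" if i: "i \<in> Rt" for i
  proof (cases "P x i > 0")
    case True
    have i_V: "i \<in> V" using i Rt_subset_V by auto
    have "\<alpha> powr reduced_cost x i * 2 powr L i \<le> 2 powr (L i - reduced_cost x i)"
      by (rule powr_mult_two_powr_le[OF \<alpha> reduced_cost_nonneg[OF x_T i True]])
    also have "\<dots> \<le> 2 powr (L x - w_min)"
      using w_min_le[OF x_V i_V True] unfolding reduced_cost_def by simp
    finally show ?thesis unfolding P_scaled_def using False True by (simp add: mult.assoc)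
  next
    case False
    then show ?thesis unfolding P_scaled_def using P_nonneg[OF x_V] i Rt_subset_V by force
  qed
  have "(\<Sum>i\<in>Rt. P_scaled \<alpha> x i * 2 powr L i) \<le> (\<Sum>i\<in>Rt. P x i) * 2 powr (L x - w_min)"
    unfolding sum_distrib_right using edge_bound by (rule sum_mono)
  also have "\<dots> \<le> 2 powr (L x - w_min)" using P_sum_Rt_le_1[OF x_V] by (simp add: mult_left_le_one_le)
  also have "\<dots> = 2 powr L x - 2 powr L x * gap"
    unfolding gap_def by (simp add: powr_diff algebra_simps powr_minus divide_inverse)
  also have "\<dots> \<le> 2 powr L x - gap" using two_powr_L_ge_1[OF x] gap_pos by simp
  finally show ?thesis .
qed

lemma scaled_max_principle:
  assumes \<alpha>: "0 < \<alpha>" "\<alpha> \<le> 1/2" and x: "x \<in> Rt" and \<eta>: "\<eta> \<ge> 0"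
    and v: "\<And>y. y \<in> Rt \<Longrightarrow> v y \<le> (\<Sum>k\<in>Rt. P_scaled \<alpha> y k * v k) + \<eta>"
  shows "v x \<le> \<eta> / gap * Phi"
proof -
  have pos: "\<And>y. y \<in> Rt \<Longrightarrow> 2 powr L y > (0 :: real)" by simp
  have "v x \<le> \<eta> / gap * 2 powr L x"
    by (rule max_principle[OF finite_Rt x P_scaled_nonneg pos two_powr_L_superharmonic[OF \<alpha>]
          gap_pos \<eta> v])
  also have "\<dots> \<le> \<eta> / gap * Phi"
    using two_powr_L_le_Phi[OF x] \<eta> gap_pos by (intro mult_left_mono) auto
  finally show ?thesis .
qed

lemma error_bound_nonneg: "0 < \<alpha> \<Longrightarrow> \<alpha> < 1 \<Longrightarrow> 0 \<le> Phi / gap * (1 / - ln \<alpha>)"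
  using Phi_ge_1 gap_pos ln_less_zero[of \<alpha>] by (intro mult_nonneg_nonneg) auto

lemma Q_scaled_le:
  assumes \<alpha>: "0 < \<alpha>" "\<alpha> \<le> 1/2" and x: "x \<in> Rt"
  shows "Q_scaled \<alpha> x \<le> Phi / gap"
proof -
  have "Q_scaled \<alpha> x \<le> 1 / gap * Phi"
  proof (rule scaled_max_principle[OF \<alpha> x])
    fix y assume "y \<in> Rt"
    then show "Q_scaled \<alpha> y \<le> (\<Sum>k\<in>Rt. P_scaled \<alpha> y k * Q_scaled \<alpha> k) + 1"
      using Q_scaled_t[OF \<alpha>(1)] Q_scaled_harmonic[of \<alpha> y] \<alpha> unfolding P_scaled_def by auto
  qed simp
  then show ?thesis by simp
qed

lemma source_term_bounds:
  assumes \<alpha>: "0 < \<alpha>" "\<alpha> \<le> 1/2" and x: "x \<in> R" and i: "i \<in> Rt"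
  shows "0 \<le> P_scaled \<alpha> x i * reduced_cost x i * Q_scaled \<alpha> i"
    and "P_scaled \<alpha> x i * reduced_cost x i * Q_scaled \<alpha> i \<le> P x i * (Phi / gap * (1 / - ln \<alpha>))"
proof -
  have x_T: "x \<in> T" and x_t: "x \<noteq> t" and x_V: "x \<in> V"
    using x R_subset_T t_notin_T unfolding T_eq by auto
  let ?\<epsilon> = "1 / - ln \<alpha>"
  let ?a = "(\<alpha> powr reduced_cost x i * reduced_cost x i) * Q_scaled \<alpha> i"
  have term_eq: "P_scaled \<alpha> x i * reduced_cost x i * Q_scaled \<alpha> i = P x i * ?a"
    unfolding P_scaled_def using x_t by (simp add: mult_ac)
  have "0 \<le> P x i * ?a \<and> P x i * ?a \<le> P x i * (Phi / gap * ?\<epsilon>)"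
  proof (cases "P x i > 0")
    case True
    have r: "reduced_cost x i \<ge> 0" using reduced_cost_nonneg[OF x_T i True] .
    have decay: "0 \<le> \<alpha> powr reduced_cost x i * reduced_cost x i"
      "\<alpha> powr reduced_cost x i * reduced_cost x i \<le> ?\<epsilon>"
      using powr_mult_le_inverse_neg_ln[OF \<alpha>(1) _ r] \<alpha> r by simp_all
    have Q: "0 \<le> Q_scaled \<alpha> i" "Q_scaled \<alpha> i \<le> Phi / gap"
      using Q_nonneg[of \<alpha> i] \<alpha> Q_scaled_le[OF \<alpha> i] unfolding Q_scaled_def by simp_all
    have "0 \<le> ?a" using decay(1) Q(1) by (rule mult_nonneg_nonneg)
    moreover have "?a \<le> ?\<epsilon> * (Phi / gap)" using decay Q \<alpha> by (intro mult_mono) auto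
    then have "?a \<le> Phi / gap * ?\<epsilon>" by (simp only: mult.commute)
    ultimately show ?thesis using True mult_left_mono[of ?a "Phi / gap * ?\<epsilon>" "P x i"] by simp
  next
    case False
    then have "P x i = 0" using P_nonneg[OF x_V] i Rt_subset_V by force
    then show ?thesis by simp
  qed
  then show "0 \<le> P_scaled \<alpha> x i * reduced_cost x i * Q_scaled \<alpha> i"
    and "P_scaled \<alpha> x i * reduced_cost x i * Q_scaled \<alpha> i \<le> P x i * (Phi / gap * ?\<epsilon>)"
    unfolding term_eq by auto
qed

lemma source_bounds:
  assumes \<alpha>: "0 < \<alpha>" "\<alpha> \<le> 1/2" and x: "x \<in> Rt"
  shows "0 \<le> source \<alpha> x \<and> source \<alpha> x \<le> Phi / gap * (1 / - ln \<alpha>)"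
proof (cases "x = t")
  case True
  then show ?thesis using error_bound_nonneg[of \<alpha>] \<alpha> unfolding source_def P_scaled_def by simp
next
  case False
  then have x_R: "x \<in> R" and x_V: "x \<in> V" using x Rt_subset_V by auto
  have "0 \<le> source \<alpha> x" "source \<alpha> x \<le> (\<Sum>i\<in>Rt. P x i) * (Phi / gap * (1 / - ln \<alpha>))"
    unfolding source_def sum_distrib_right using source_term_bounds[OF \<alpha> x_R]
    by (auto intro: sum_nonneg sum_mono)
  moreover have "(\<Sum>i\<in>Rt. P x i) * (Phi / gap * (1 / - ln \<alpha>)) \<le> Phi / gap * (1 / - ln \<alpha>)"
    using P_sum_Rt_le_1[OF x_V] error_bound_nonneg[of \<alpha>] \<alpha> P_nonneg[OF x_V] Rt_subset_V
    by (intro mult_left_le_one_le sum_nonneg) auto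
  ultimately show ?thesis by linarith
qed

lemma D_scaled_bounds:
  assumes \<alpha>: "0 < \<alpha>" "\<alpha> \<le> 1/2" and x: "x \<in> Rt"
  shows "0 \<le> D_scaled \<alpha> x \<and> D_scaled \<alpha> x \<le> Phi / gap * (1 / - ln \<alpha>) / gap * Phi"
proof -
  have eq: "D_scaled \<alpha> y = (\<Sum>k\<in>Rt. P_scaled \<alpha> y k * D_scaled \<alpha> k) + source \<alpha> y"
    if "y \<in> Rt" for y
    using that D_scaled_t D_scaled_eq[of \<alpha> y] \<alpha> unfolding source_def P_scaled_def by auto
  have "D_scaled \<alpha> x \<le> Phi / gap * (1 / - ln \<alpha>) / gap * Phi"
  proof (rule scaled_max_principle[OF \<alpha> x])
    show "0 \<le> Phi / gap * (1 / - ln \<alpha>)" using error_bound_nonneg \<alpha> by simp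
    fix y assume "y \<in> Rt"
    then show "D_scaled \<alpha> y \<le> (\<Sum>k\<in>Rt. P_scaled \<alpha> y k * D_scaled \<alpha> k) + Phi / gap * (1 / - ln \<alpha>)"
      using eq source_bounds[OF \<alpha>] by fastforce
  qed
  moreover have "- D_scaled \<alpha> x \<le> 0 / gap * Phi"
  proof (rule scaled_max_principle[OF \<alpha> x order_refl])
    fix y assume "y \<in> Rt"
    then show "- D_scaled \<alpha> y \<le> (\<Sum>k\<in>Rt. P_scaled \<alpha> y k * - D_scaled \<alpha> k) + 0"
      using eq source_bounds[OF \<alpha>] by (fastforce simp: sum_negf)
  qed
  ultimately show ?thesis by simp
qed

section \<open>The limit\<close>

lemma Q_ge_path_prob:
  assumes \<alpha>: "0 < \<alpha>" "\<alpha> < 1"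
  shows "dpath V P Fs x t xs \<Longrightarrow> Q \<alpha> x \<ge> path_prob P xs * \<alpha> powr path_cost w xs"
proof (induction xs arbitrary: x rule: induct_list012)
  case 1
  then show ?case by (simp add: dpath_def)
next
  case (2 y)
  then have "x = t" by (auto simp: dpath_def)
  then show ?case using \<alpha> by (simp add: path_prob_def path_cost_def Q_t)
next
  case (3 y z zs)
  have x: "x = y" using "3.prems" by (simp add: dpath_def)
  have path: "x \<in> V - Fs" "x \<notin> set (z # zs)" "P x z > 0" "dpath V P Fs z t (z # zs)"
    using "3.prems" unfolding x dpath_Cons by auto
  have "t \<in> set (z # zs)" using path(4) last_in_set unfolding dpath_def by metis
  then have x_T: "x \<in> T" using path(1,2) unfolding T_eq by auto
  have z_V: "z \<in> V" using path(4) unfolding dpath_def by auto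
  have "path_prob P (y # z # zs) * \<alpha> powr path_cost w (y # z # zs)
      = Pev P w \<alpha> x z * (path_prob P (z # zs) * \<alpha> powr path_cost w (z # zs))"
    unfolding x path_prob_Cons path_cost_Cons Pev_def by (simp add: powr_add mult_ac)
  also have "\<dots> \<le> Pev P w \<alpha> x z * Q \<alpha> z"
    using "3.IH"(2)[OF path(4)] Pev_nonneg[OF _ z_V \<alpha>(1)] x_T unfolding T_eq
    by (intro mult_left_mono) auto
  also have "\<dots> \<le> (\<Sum>i\<in>V. Pev P w \<alpha> x i * Q \<alpha> i)"
    using Pev_nonneg[OF _ _ \<alpha>(1)] Q_nonneg[OF \<alpha>] x_T z_V unfolding T_eq
    by (intro member_le_sum finite_V) auto
  also have "\<dots> = Q \<alpha> x" using Q_harmonic[OF \<alpha> x_T] ..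
  finally show ?case .
qed

lemma Q_scaled_lower_bound:
  assumes "s \<in> R"
  obtains p where "p > 0" and "\<And>\<alpha>. 0 < \<alpha> \<Longrightarrow> \<alpha> < 1 \<Longrightarrow> Q_scaled \<alpha> s \<ge> p"
proof -
  obtain xs where xs: "dpath V P Fs s t xs" "path_cost w xs = L s"
    using L_attained assms by blast
  show ?thesis
  proof (rule that)
    show "path_prob P xs > 0"
      using xs(1) unfolding dpath_def path_prob_def by (auto intro: prod_pos)
    show "Q_scaled \<alpha> s \<ge> path_prob P xs" if "0 < \<alpha>" "\<alpha> < 1" for \<alpha>
      using Q_ge_path_prob[OF that xs(1)] that unfolding Q_scaled_def xs(2)
      by (simp add: le_divide_eq)
  qed
qed

lemma avoidU_bounds:
  assumes s: "s \<in> R" and p: "p > 0" "\<And>\<alpha>. 0 < \<alpha> \<Longrightarrow> \<alpha> < 1 \<Longrightarrow> Q_scaled \<alpha> s \<ge> p"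
    and \<alpha>: "0 < \<alpha>" "\<alpha> \<le> 1/2"
  shows "L s \<le> avoidU V P w \<alpha> t Fs s"
    and "avoidU V P w \<alpha> t Fs s \<le> L s + Phi * Phi / (gap * gap * p) * (1 / - ln \<alpha>)"
proof -
  have \<alpha>1: "\<alpha> < 1" using \<alpha> by simp
  have s_T: "s \<in> T" using s R_subset_T by auto
  have q: "Q_scaled \<alpha> s \<ge> p" using p(2)[OF \<alpha>(1) \<alpha>1] .
  have scale: "\<alpha> powr L s > 0" using \<alpha> by simp
  have "Q \<alpha> s = \<alpha> powr L s * Q_scaled \<alpha> s" and "N \<alpha> s = L s * Q \<alpha> s + \<alpha> powr L s * D_scaled \<alpha> s"
    unfolding Q_scaled_def D_scaled_def using scale by simp_all
  then have U: "avoidU V P w \<alpha> t Fs s = L s + D_scaled \<alpha> s / Q_scaled \<alpha> s"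
    unfolding avoidU_eq[OF \<alpha>(1) \<alpha>1 s_T] using scale q p(1) by (simp add: field_simps)
  have D: "0 \<le> D_scaled \<alpha> s" "D_scaled \<alpha> s \<le> Phi / gap * (1 / - ln \<alpha>) / gap * Phi"
    using D_scaled_bounds[OF \<alpha>] s by auto
  have "D_scaled \<alpha> s / Q_scaled \<alpha> s \<le> D_scaled \<alpha> s / p"
    using D(1) q p(1) by (intro divide_left_mono) auto
  also have "\<dots> \<le> (Phi / gap * (1 / - ln \<alpha>) / gap * Phi) / p"
    using D(2) p(1) by (intro divide_right_mono) auto
  also have "\<dots> = Phi * Phi / (gap * gap * p) * (1 / - ln \<alpha>)"
    by (simp add: field_simps)
  finally show "avoidU V P w \<alpha> t Fs s \<le> L s + Phi * Phi / (gap * gap * p) * (1 / - ln \<alpha>)"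
    unfolding U by simp
  show "L s \<le> avoidU V P w \<alpha> t Fs s"
    unfolding U using D(1) q p(1) by simp
qed

lemma avoidU_tendsto:
  assumes s: "s \<in> R"
  shows "((\<lambda>\<alpha>. avoidU V P w \<alpha> t Fs s) \<longlongrightarrow> L s) (at_right 0)"
proof -
  obtain p where p: "p > 0" "\<And>\<alpha>. 0 < \<alpha> \<Longrightarrow> \<alpha> < 1 \<Longrightarrow> Q_scaled \<alpha> s \<ge> p"
    using Q_scaled_lower_bound[OF s] by blast
  define K where "K = Phi * Phi / (gap * gap * p)"
  have small: "\<forall>\<^sub>F \<alpha> in at_right 0. 0 < \<alpha> \<and> \<alpha> \<le> (1/2 :: real)"
    unfolding eventually_at_right_field by (intro exI[of _ "1/2"]) auto
  show ?thesis
  proof (rule tendsto_sandwich)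
    show "\<forall>\<^sub>F \<alpha> in at_right 0. L s \<le> avoidU V P w \<alpha> t Fs s"
      using small by eventually_elim (use avoidU_bounds(1)[OF s p] in auto)
    show "\<forall>\<^sub>F \<alpha> in at_right 0. avoidU V P w \<alpha> t Fs s \<le> L s + K * (1 / - ln \<alpha>)"
      using small by eventually_elim (use avoidU_bounds(2)[OF s p] in \<open>auto simp: K_def\<close>)
    show "((\<lambda>\<alpha>. L s + K * (1 / - ln \<alpha>)) \<longlongrightarrow> L s) (at_right 0)"
      using tendsto_add[OF tendsto_const tendsto_mult[OF tendsto_const tendsto_inverse_neg_ln_at_right_0]]
      by simp
  qed simp
qed

end

theorem mainTheorem9:
  fixes V :: "'v set" and P w :: "'v \<Rightarrow> 'v \<Rightarrow> real" and t s :: 'v and Fs :: "'v set"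
  assumes "finite V"
    and "\<And>i j. i \<in> V \<Longrightarrow> j \<in> V \<Longrightarrow> P i j \<ge> 0"
    and "\<And>i. i \<in> V \<Longrightarrow> (\<Sum>j\<in>V. P i j) = 1"
    and "\<And>i j. i \<in> V \<Longrightarrow> j \<in> V \<Longrightarrow> P i j > 0 \<Longrightarrow> w i j > 0"
    and "t \<in> V" and "Fs \<subseteq> V - {t}" and "s \<in> V - (Fs \<union> {t})"
    and "\<exists>xs. dpath V P Fs s t xs"
  shows "((\<lambda>\<alpha>. avoidU V P w \<alpha> t Fs s) \<longlongrightarrow> Lmin V P w Fs s t) (at_right 0)"
proof -
  interpret evaporating_network V P w t Fs
    using assms(1-6) by unfold_locales
  have "s \<in> R" using assms(7,8) unfolding R_def T_eq by auto
  then show ?thesis using avoidU_tendsto unfolding L_def by blast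
qed

end
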